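(* Let $r\in\mathbb{N}$, $\alpha\in\mathbb{N}$, $\beta>\frac{r+1}{2\alpha}$, let $f\in C(\mathbb{R})$ with $f\in L_1(\mathbb{R})$, and let $\xi>0$. Then $$\|M_{r,\xi}f-f\|_1\le\frac{2\alpha\Gamma(\beta)}{\Gamma(\frac{1}{2\alpha})\Gamma(\beta-\frac{1}{2\alpha})}\left(\int_0^\infty(1+t)^r\frac{1}{(t^{2\alpha}+1)^{\beta}}dt\right)\omega_r(f,\xi)_1.$$ Hence $M_{r,\xi}\to I$ (the unit operator) in the $L_1$ norm as $\xi\to0$.
   Context: Here $n=0$: set $\alpha_j=(-1)^{r-j}\binom{r}{j}$ for $j=1,\dots,r$ and $\alpha_0=1-\sum_{j=1}^r(-1)^{r-j}\binom{r}{j}$. For $\alpha\in\mathbb{N}$, $\beta>\frac{1}{2\alpha}$, $\xi>0$, let $W=\frac{\Gamma(\beta)\alpha\xi^{2\alpha\beta-1}}{\Gamma(\frac{1}{2\alpha})\Gamma(\beta-\frac{1}{2\alpha})}$ and $M_{r,\xi}(f;x)=W\int_{-\infty}^{\infty}\frac{\sum_{j=0}^r\alpha_jf(x+jt)}{(t^{2\alpha}+\xi^{2\alpha})^{\beta}}dt$, $x\in\mathbb{R}$. For $g\in L_1(\mathbb{R})$, $\Delta_t^rg(x)=\sum_{j=0}^r(-1)^{r-j}\binom{r}{j}g(x+jt)$ and $\omega_r(g,h)_1=\sup_{|t|\le h}\|\Delta_t^rg(x)\|_{1,x}$, $h>0$. *)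

theory Defs
  imports "HOL-Analysis.Analysis"
begin

definition alpha_coef :: "nat \<Rightarrow> nat \<Rightarrow> real" where
  "alpha_coef r j = (if j = 0
      then 1 - (\<Sum>i=1..r. (-1) ^ (r - i) * real (r choose i))
      else (-1) ^ (r - j) * real (r choose j))"

definition W_const :: "nat \<Rightarrow> real \<Rightarrow> real \<Rightarrow> real" where
  "W_const a \<beta> \<xi> = Gamma \<beta> * real a * \<xi> powr (2 * real a * \<beta> - 1) /
      (Gamma (1 / (2 * real a)) * Gamma (\<beta> - 1 / (2 * real a)))"

text \<open>The operator M_{r,xi} (parameters alpha = a, beta).\<close>
definition M_op :: "nat \<Rightarrow> nat \<Rightarrow> real \<Rightarrow> real \<Rightarrow> (real \<Rightarrow> real) \<Rightarrow> real \<Rightarrow> real" where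
  "M_op r a \<beta> \<xi> f x = W_const a \<beta> \<xi> *
      (LINT t|lborel. (\<Sum>j=0..r. alpha_coef r j * f (x + real j * t)) /
                      (t ^ (2 * a) + \<xi> ^ (2 * a)) powr \<beta>)"

definition L1_norm :: "(real \<Rightarrow> real) \<Rightarrow> real" where
  "L1_norm g = (LINT x|lborel. \<bar>g x\<bar>)"

definition fdiff :: "nat \<Rightarrow> real \<Rightarrow> (real \<Rightarrow> real) \<Rightarrow> real \<Rightarrow> real" where
  "fdiff r t g x = (\<Sum>j=0..r. (-1) ^ (r - j) * real (r choose j) * g (x + real j * t))"

definition omega1 :: "nat \<Rightarrow> (real \<Rightarrow> real) \<Rightarrow> real \<Rightarrow> real" where
  "omega1 r g h = (SUP t\<in>{-h..h}. L1_norm (fdiff r t g))"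

end

theory Submission
  imports Defs "HOL-Real_Asymp.Real_Asymp"
begin

text \<open>Since the coefficients \<open>\<alpha>_j\<close> sum to \<open>1\<close> and \<open>W\<close> normalises the kernel
  \<open>K(t) = (t^(2\<alpha>) + \<xi>^(2\<alpha>))^(-\<beta>)\<close>, we have \<open>M f x - f x = W \<integral> \<Delta>_t^r f x K(t) dt\<close>.
  Minkowski's integral inequality bounds the \<open>L\<^sub>1\<close> norm of this by \<open>W \<integral> \<parallel>\<Delta>_t^r f\<parallel>\<^sub>1 K(t) dt\<close>,
  and splitting a step \<open>t\<close> into \<open>\<lceil>|t|/\<xi>\<rceil>\<close> steps of size at most \<open>\<xi>\<close> gives
  \<open>\<parallel>\<Delta>_t^r f\<parallel>\<^sub>1 \<le> (1 + |t|/\<xi>)^r \<omega>_r(f, \<xi>)\<close>. After the substitution \<open>t = \<xi> u\<close>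
  the remaining kernel integrals are Beta integrals. Finally
  \<open>\<omega>_r(f, \<xi>) \<le> 2^(r-1) sup {\<parallel>f(\<cdot> + t) - f\<parallel>\<^sub>1 | |t| \<le> \<xi>}\<close>, which tends to \<open>0\<close> by the
  \<open>L\<^sub>1\<close> continuity of translation.\<close>

definition Delta :: "real \<Rightarrow> (real \<Rightarrow> real) \<Rightarrow> real \<Rightarrow> real" where
  "Delta h g = (\<lambda>x. g (x + h) - g x)"

lemma alternating_binomial_sum_Suc:
  fixes u :: "nat \<Rightarrow> real"
  shows "(\<Sum>j\<le>Suc r. (-1) ^ (Suc r - j) * real (Suc r choose j) * u j)
       = (\<Sum>j\<le>r. (-1) ^ (r - j) * real (r choose j) * u (Suc j))
       - (\<Sum>j\<le>r. (-1) ^ (r - j) * real (r choose j) * u j)"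
proof -
  have pascal: "(\<Sum>j\<le>Suc r. (-1) ^ (Suc r - j) * real (Suc r choose j) * u j)
      = (-1) ^ Suc r * u 0 + (\<Sum>j\<le>r. (-1) ^ (r - j) * real (r choose j) * u (Suc j))
        + (\<Sum>j\<le>r. (-1) ^ (r - j) * real (r choose Suc j) * u (Suc j))"
    by (simp add: sum.atMost_Suc_shift sum.distrib algebra_simps del: sum.atMost_Suc)
  have split_first: "(\<Sum>j\<le>r. (-1) ^ (r - j) * real (r choose j) * u j)
      = (-1) ^ r * u 0 + (\<Sum>j<r. (-1) ^ (r - Suc j) * real (r choose Suc j) * u (Suc j))"
    unfolding lessThan_Suc_atMost[symmetric] sum.lessThan_Suc_shift by simp
  have "(\<Sum>j\<le>r. (-1) ^ (r - j) * real (r choose Suc j) * u (Suc j))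
      = (\<Sum>j<r. (-1) ^ (r - j) * real (r choose Suc j) * u (Suc j))"
    unfolding lessThan_Suc_atMost[symmetric] by simp
  also have "\<dots> = - (\<Sum>j<r. (-1) ^ (r - Suc j) * real (r choose Suc j) * u (Suc j))"
    unfolding sum_negf[symmetric]
  proof (intro sum.cong refl)
    fix j assume "j \<in> {..<r}"
    then have "r - j = Suc (r - Suc j)" by auto
    then show "(-1) ^ (r - j) * real (r choose Suc j) * u (Suc j)
        = - ((-1) ^ (r - Suc j) * real (r choose Suc j) * u (Suc j))" by simp
  qed
  finally show ?thesis unfolding pascal split_first by simp
qed

lemma fdiff_0: "fdiff 0 h g = g"
  by (simp add: fdiff_def fun_eq_iff)

lemma fdiff_Suc: "fdiff (Suc r) h g = Delta h (fdiff r h g)"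
proof
  fix x
  have "fdiff (Suc r) h g x
      = (\<Sum>j\<le>Suc r. (-1) ^ (Suc r - j) * real (Suc r choose j) * g (x + real j * h))"
    by (simp add: fdiff_def atLeast0AtMost)
  also have "\<dots> = Delta h (fdiff r h g) x"
    unfolding alternating_binomial_sum_Suc
    by (simp add: Delta_def fdiff_def atLeast0AtMost algebra_simps)
  finally show "fdiff (Suc r) h g x = Delta h (fdiff r h g) x" .
qed

lemma fdiff_eq_funpow: "fdiff r h g = (Delta h ^^ r) g"
  by (induction r) (simp_all add: fdiff_0 fdiff_Suc)

lemma L1_norm_nonneg: "L1_norm g \<ge> 0"
  unfolding L1_norm_def by simp

lemma integrable_translate:
  fixes g :: "real \<Rightarrow> real"
  assumes "integrable lborel g"
  shows "integrable lborel (\<lambda>x. g (x + s))"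
  using lborel_integrable_real_affine[OF assms, of 1 s] by (simp add: add.commute)

lemma L1_norm_translate: "L1_norm (\<lambda>x. g (x + s)) = L1_norm g"
  unfolding L1_norm_def
  using lborel_integral_real_affine[of 1 "\<lambda>x. \<bar>g x\<bar>" s] by (simp add: add.commute)

lemma L1_norm_diff_le:
  assumes "integrable lborel u" "integrable lborel v"
  shows "L1_norm (\<lambda>x. u x - v x) \<le> L1_norm u + L1_norm v"
proof -
  have "L1_norm (\<lambda>x. u x - v x) \<le> (LINT x|lborel. \<bar>u x\<bar> + \<bar>v x\<bar>)"
    unfolding L1_norm_def using assms by (intro integral_mono) auto
  also have "\<dots> = L1_norm u + L1_norm v"
    unfolding L1_norm_def using assms by (intro Bochner_Integration.integral_add) auto
  finally show ?thesis .
qed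

lemma L1_norm_sum_translates_le:
  assumes "integrable lborel g"
  shows "L1_norm (\<lambda>x. \<Sum>k<m. g (x + c k)) \<le> real m * L1_norm g"
proof -
  note integrable = integrable_translate[OF assms]
  have "L1_norm (\<lambda>x. \<Sum>k<m. g (x + c k)) \<le> (LINT x|lborel. (\<Sum>k<m. \<bar>g (x + c k)\<bar>))"
    unfolding L1_norm_def using integrable
    by (intro integral_mono) (auto intro!: Bochner_Integration.integrable_sum sum_abs)
  also have "\<dots> = (\<Sum>k<m. L1_norm (\<lambda>x. g (x + c k)))"
    unfolding L1_norm_def using integrable by (intro Bochner_Integration.integral_sum) auto
  also have "\<dots> = real m * L1_norm g" by (simp add: L1_norm_translate)
  finally show ?thesis .
qed

lemma integrable_Delta: "integrable lborel g \<Longrightarrow> integrable lborel (Delta h g)"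
  unfolding Delta_def by (intro Bochner_Integration.integrable_diff integrable_translate)

lemma integrable_Delta_funpow: "integrable lborel g \<Longrightarrow> integrable lborel ((Delta h ^^ n) g)"
  by (induction n) (simp_all add: integrable_Delta)

lemma integrable_fdiff: "integrable lborel g \<Longrightarrow> integrable lborel (fdiff r h g)"
  unfolding fdiff_eq_funpow by (rule integrable_Delta_funpow)

lemma L1_norm_Delta_le:
  assumes "integrable lborel g"
  shows "L1_norm (Delta h g) \<le> 2 * L1_norm g"
  using L1_norm_diff_le[OF integrable_translate[OF assms] assms, of h]
  by (simp add: Delta_def L1_norm_translate)

lemma L1_norm_Delta_funpow_le:
  "integrable lborel g \<Longrightarrow> L1_norm ((Delta h ^^ n) g) \<le> 2 ^ n * L1_norm g"
proof (induction n)
  case (Suc n)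
  have "L1_norm ((Delta h ^^ Suc n) g) \<le> 2 * L1_norm ((Delta h ^^ n) g)"
    using L1_norm_Delta_le[OF integrable_Delta_funpow[OF Suc.prems]] by simp
  also have "\<dots> \<le> 2 * (2 ^ n * L1_norm g)" using Suc by simp
  finally show ?case by simp
qed simp

lemma Delta_funpow_sum_translates:
  "(Delta s ^^ n) (\<lambda>x. \<Sum>k\<in>K. \<phi> k (x + c k)) = (\<lambda>x. \<Sum>k\<in>K. (Delta s ^^ n) (\<phi> k) (x + c k))"
  by (induction n) (simp_all add: Delta_def sum_subtractf algebra_simps)

lemma Delta_mult_eq_sum: "Delta (real m * h) g = (\<lambda>x. \<Sum>k<m. Delta h g (x + real k * h))"
proof
  fix x
  have "(\<Sum>k<m. Delta h g (x + real k * h))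
      = (\<Sum>k<m. g (x + real (Suc k) * h) - g (x + real k * h))"
    unfolding Delta_def by (simp add: algebra_simps)
  also have "\<dots> = g (x + real m * h) - g (x + real 0 * h)"
    by (rule sum_lessThan_telescope)
  finally show "Delta (real m * h) g x = (\<Sum>k<m. Delta h g (x + real k * h))"
    by (simp add: Delta_def)
qed

lemma L1_norm_Delta_funpow_mult_le:
  "integrable lborel g \<Longrightarrow>
     L1_norm ((Delta (real m * h) ^^ n) g) \<le> real m ^ n * L1_norm ((Delta h ^^ n) g)"
proof (induction n arbitrary: g)
  case (Suc n)
  have "(Delta (real m * h) ^^ Suc n) g = (Delta (real m * h) ^^ n) (Delta (real m * h) g)"
    by (simp add: funpow_Suc_right del: funpow.simps)
  also have "\<dots> = (\<lambda>x. \<Sum>k<m. (Delta (real m * h) ^^ n) (Delta h g) (x + real k * h))"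
    unfolding Delta_mult_eq_sum[of m h g] by (rule Delta_funpow_sum_translates)
  finally have "L1_norm ((Delta (real m * h) ^^ Suc n) g)
      \<le> real m * L1_norm ((Delta (real m * h) ^^ n) (Delta h g))"
    using L1_norm_sum_translates_le integrable_Delta_funpow integrable_Delta Suc.prems by metis
  also have "\<dots> \<le> real m * (real m ^ n * L1_norm ((Delta h ^^ n) (Delta h g)))"
    by (intro mult_left_mono Suc.IH integrable_Delta Suc.prems) auto
  also have "(Delta h ^^ n) (Delta h g) = (Delta h ^^ Suc n) g"
    by (simp add: funpow_Suc_right del: funpow.simps)
  finally show ?case by (simp add: mult.assoc)
qed simp

context
  fixes f :: "real \<Rightarrow> real" and r :: nat and \<xi> :: real
  assumes f: "integrable lborel f" and \<xi>: "\<xi> > 0"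
begin

lemma L1_norm_fdiff_le_omega1: "\<bar>t\<bar> \<le> \<xi> \<Longrightarrow> L1_norm (fdiff r t f) \<le> omega1 r f \<xi>"
  unfolding omega1_def
  by (rule cSUP_upper, force, rule bdd_aboveI[of _ "2 ^ r * L1_norm f"])
     (auto simp: fdiff_eq_funpow intro!: L1_norm_Delta_funpow_le f)

lemma omega1_nonneg: "omega1 r f \<xi> \<ge> 0"
  using L1_norm_fdiff_le_omega1[of 0] L1_norm_nonneg[of "fdiff r 0 f"] \<xi> by simp

lemma L1_norm_fdiff_le_scaled_omega1:
  "L1_norm (fdiff r t f) \<le> (1 + \<bar>t\<bar> / \<xi>) ^ r * omega1 r f \<xi>"
proof (cases "\<bar>t\<bar> \<le> \<xi>")
  case True
  have "L1_norm (fdiff r t f) \<le> 1 * omega1 r f \<xi>"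
    using L1_norm_fdiff_le_omega1[OF True] by simp
  also have "\<dots> \<le> (1 + \<bar>t\<bar> / \<xi>) ^ r * omega1 r f \<xi>"
    using \<xi> by (intro mult_right_mono omega1_nonneg one_le_power) auto
  finally show ?thesis .
next
  case False
  define m where "m = nat \<lceil>\<bar>t\<bar> / \<xi>\<rceil>"
  have ratio: "\<bar>t\<bar> / \<xi> > 1" using False \<xi> by (simp add: field_simps)
  then have m_ge: "real m \<ge> \<bar>t\<bar> / \<xi>" and m_le: "real m \<le> 1 + \<bar>t\<bar> / \<xi>"
    unfolding m_def by linarith+
  with ratio have m_pos: "real m > 0" by linarith
  define s where "s = t / real m"
  have t_eq: "t = real m * s" unfolding s_def using m_pos by simp
  have s: "\<bar>s\<bar> \<le> \<xi>" unfolding s_def using m_pos \<xi> m_ge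
    by (simp add: abs_div field_simps)
  have "L1_norm (fdiff r t f) \<le> real m ^ r * L1_norm (fdiff r s f)"
    unfolding fdiff_eq_funpow t_eq by (rule L1_norm_Delta_funpow_mult_le[OF f])
  also have "\<dots> \<le> real m ^ r * omega1 r f \<xi>"
    by (intro mult_left_mono L1_norm_fdiff_le_omega1 s) auto
  also have "\<dots> \<le> (1 + \<bar>t\<bar> / \<xi>) ^ r * omega1 r f \<xi>"
    by (intro mult_right_mono omega1_nonneg power_mono m_le) auto
  finally show ?thesis .
qed

end

lemma tail_integral_tendsto_0:
  fixes f :: "real \<Rightarrow> real"
  assumes f: "integrable lborel f"
  shows "((\<lambda>R. LINT x|lborel. \<bar>f x\<bar> * indicator {x. R \<le> \<bar>x\<bar>} x) \<longlongrightarrow> 0) at_top"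
proof -
  define tail where "tail R x = \<bar>f x\<bar> * indicator {x. R \<le> \<bar>x\<bar>} x" for R x :: real
  have "((\<lambda>R. integral\<^sup>L lborel (tail R)) \<longlongrightarrow> integral\<^sup>L lborel (\<lambda>x::real. 0::real)) at_top"
  proof (rule integral_dominated_convergence_at_top[where w="\<lambda>x. \<bar>f x\<bar>"])
    show "tail R \<in> borel_measurable lborel" for R
      using f unfolding tail_def by measurable
    show "AE x in lborel. ((\<lambda>R. tail R x) \<longlongrightarrow> 0) at_top"
    proof (rule AE_I2, rule tendsto_eventually)
      fix x :: real
      show "\<forall>\<^sub>F R in at_top. tail R x = 0"
        using eventually_gt_at_top[of "\<bar>x\<bar>"] by eventually_elim (auto simp: tail_def)
    qed
  qed (use f in \<open>auto simp: tail_def indicator_def\<close>)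
  then show ?thesis by (simp add: tail_def[abs_def])
qed

text \<open>Outside \<open>(-R, R)\<close>, each of \<open>f (x + h)\<close> and \<open>f x\<close> is estimated by the tail beyond \<open>R - 1\<close>.\<close>
lemma L1_norm_Delta_le_tail:
  fixes f :: "real \<Rightarrow> real"
  assumes f: "integrable lborel f" and R: "R \<ge> 0" and h: "\<bar>h\<bar> \<le> 1"
    and near: "\<And>x. \<bar>x\<bar> < R \<Longrightarrow> \<bar>f (x + h) - f x\<bar> \<le> \<eta>"
  defines "tail \<equiv> \<lambda>x. \<bar>f x\<bar> * indicator {x. R - 1 \<le> \<bar>x\<bar>} x"
  shows "L1_norm (Delta h f) \<le> 2 * R * \<eta> + 2 * integral\<^sup>L lborel tail"
proof -
  have fm[measurable]: "f \<in> borel_measurable borel"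
    using f by auto
  have tail: "integrable lborel tail"
    unfolding tail_def by (rule integrable_real_mult_indicator) (auto intro: f)
  have bound: "integrable lborel (\<lambda>x. \<eta> * indicator {-R<..<R} x)"
    using R by (intro integrable_mult_right integrable_real_indicator) auto
  have pointwise: "\<bar>f (x + h) - f x\<bar> \<le> \<eta> * indicator {-R<..<R} x + tail (x + h) + tail x" for x
    using near[of x] h by (cases "\<bar>x\<bar> < R") (auto simp: tail_def indicator_def)
  have tail_h: "integrable lborel (\<lambda>x. tail (x + h))"
    by (rule integrable_translate[OF tail])
  have "L1_norm (Delta h f) \<le> (LINT x|lborel. \<eta> * indicator {-R<..<R} x + tail (x + h) + tail x)"
    unfolding L1_norm_def Delta_def
    by (intro integral_mono pointwise Bochner_Integration.integrable_add bound tail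
        integrable_translate integrable_abs Bochner_Integration.integrable_diff f)
  also have "\<dots> = (LINT x|lborel. \<eta> * indicator {-R<..<R} x)
      + (LINT x|lborel. tail (x + h)) + integral\<^sup>L lborel tail"
    by (simp only: Bochner_Integration.integral_add[OF Bochner_Integration.integrable_add[OF bound tail_h] tail]
        Bochner_Integration.integral_add[OF bound tail_h])
  also have "(LINT x|lborel. tail (x + h)) = integral\<^sup>L lborel tail"
    using lborel_integral_real_affine[of 1 tail h] by (simp add: add.commute)
  also have "(LINT x|lborel. \<eta> * indicator {-R<..<R} x) = 2 * R * \<eta>"
    using R by simp
  finally show ?thesis by simp
qed

lemma L1_norm_Delta_small:
  fixes f :: "real \<Rightarrow> real" and \<epsilon> :: real
  assumes cont: "continuous_on UNIV f" and f: "integrable lborel f" and \<epsilon>: "\<epsilon> > 0"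
  shows "\<exists>\<delta>>0. \<forall>h. \<bar>h\<bar> < \<delta> \<longrightarrow> L1_norm (Delta h f) \<le> \<epsilon>"
proof -
  have "\<forall>\<^sub>F R in at_top. (LINT x|lborel. \<bar>f x\<bar> * indicator {x. R \<le> \<bar>x\<bar>} x) < \<epsilon> / 4"
    using \<epsilon> by (intro order_tendstoD(2)[OF tail_integral_tendsto_0[OF f]]) auto
  then obtain R0 where R0: "\<And>R. R \<ge> R0 \<Longrightarrow>
      (LINT x|lborel. \<bar>f x\<bar> * indicator {x. R \<le> \<bar>x\<bar>} x) < \<epsilon> / 4"
    by (auto simp: eventually_at_top_linorder)
  define R where "R = max R0 0 + 1"
  have R: "R \<ge> 1" and tail: "(LINT x|lborel. \<bar>f x\<bar> * indicator {x. R - 1 \<le> \<bar>x\<bar>} x) < \<epsilon> / 4"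
    using R0[of "R - 1"] by (auto simp: R_def)
  have "uniformly_continuous_on {-R-1..R+1} f"
    by (rule compact_uniformly_continuous[OF continuous_on_subset[OF cont]]) auto
  moreover have "\<epsilon> / (4 * R) > 0" using \<epsilon> R by simp
  ultimately obtain d where d: "d > 0" and close: "\<And>x x'. x \<in> {-R-1..R+1} \<Longrightarrow>
      x' \<in> {-R-1..R+1} \<Longrightarrow> dist x' x < d \<Longrightarrow> dist (f x') (f x) < \<epsilon> / (4 * R)"
    unfolding uniformly_continuous_on_def by metis
  show ?thesis
  proof (intro exI[of _ "min 1 d"] conjI allI impI)
    fix h :: real assume h: "\<bar>h\<bar> < min 1 d"
    have "\<bar>f (x + h) - f x\<bar> \<le> \<epsilon> / (4 * R)" if "\<bar>x\<bar> < R" for x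
    proof -
      have "x \<in> {-R-1..R+1}" "x + h \<in> {-R-1..R+1}" using that h by (auto simp: abs_less_iff)
      from close[OF this] h show ?thesis by (simp add: dist_real_def)
    qed
    then have "L1_norm (Delta h f) \<le> 2 * R * (\<epsilon> / (4 * R))
        + 2 * (LINT x|lborel. \<bar>f x\<bar> * indicator {x. R - 1 \<le> \<bar>x\<bar>} x)"
      using R h by (intro L1_norm_Delta_le_tail f) auto
    with tail R show "L1_norm (Delta h f) \<le> \<epsilon>" by simp
  qed (use d in simp)
qed

lemma omega1_tendsto_0:
  fixes f :: "real \<Rightarrow> real"
  assumes cont: "continuous_on UNIV f" and f: "integrable lborel f" and r: "r \<ge> 1"
  shows "(omega1 r f \<longlongrightarrow> 0) (at_right 0)"
proof (rule order_tendstoI)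
  fix y :: real assume "y < 0"
  then show "\<forall>\<^sub>F \<eta> in at_right 0. y < omega1 r f \<eta>"
    unfolding eventually_at_right_field
    using omega1_nonneg[OF f] by (intro exI[of _ 1]) (auto intro: less_le_trans)
next
  fix y :: real assume y: "y > 0"
  define \<epsilon> where "\<epsilon> = y / 2 / 2 ^ (r - 1)"
  have "\<epsilon> > 0" using y by (simp add: \<epsilon>_def)
  then obtain \<delta> where \<delta>: "\<delta> > 0" and small: "\<And>h. \<bar>h\<bar> < \<delta> \<Longrightarrow> L1_norm (Delta h f) \<le> \<epsilon>"
    using L1_norm_Delta_small[OF cont f] by blast
  have "omega1 r f \<eta> < y" if \<eta>: "0 < \<eta>" "\<eta> < \<delta>" for \<eta>
  proof -
    have "omega1 r f \<eta> \<le> 2 ^ (r - 1) * \<epsilon>"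
      unfolding omega1_def
    proof (rule cSUP_least)
      fix t assume t: "t \<in> {-\<eta>..\<eta>}"
      have "fdiff r t f = (Delta t ^^ Suc (r - 1)) f" using r by (simp add: fdiff_eq_funpow)
      also have "\<dots> = (Delta t ^^ (r - 1)) (Delta t f)"
        by (simp add: funpow_Suc_right del: funpow.simps)
      finally have "fdiff r t f = (Delta t ^^ (r - 1)) (Delta t f)" .
      then have "L1_norm (fdiff r t f) \<le> 2 ^ (r - 1) * L1_norm (Delta t f)"
        using L1_norm_Delta_funpow_le[OF integrable_Delta[OF f]] by simp
      also have "\<dots> \<le> 2 ^ (r - 1) * \<epsilon>"
        using t \<eta> by (intro mult_left_mono small) auto
      finally show "L1_norm (fdiff r t f) \<le> 2 ^ (r - 1) * \<epsilon>" .
    qed (use \<eta> in simp)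
    also have "\<dots> < y" using y by (simp add: \<epsilon>_def)
    finally show ?thesis .
  qed
  then show "\<forall>\<^sub>F \<eta> in at_right 0. omega1 r f \<eta> < y"
    unfolding eventually_at_right_field using \<delta> by blast
qed

lemma even_power_add_pos: "c > 0 \<Longrightarrow> (y::real) ^ (2 * p) + c > 0"
  by (simp add: power_mult add_nonneg_pos)

text \<open>The substitution \<open>t = (x / (1 - x)) powr c\<close> with \<open>c = 1 / (2 p)\<close> turns
  \<open>t ^ m / (t ^ (2 p) + 1) powr \<beta> dt\<close> into a Beta integrand on \<open>(0, 1)\<close>.\<close>
lemma Beta_substitution_identity:
  fixes x \<beta> c :: real and m p :: nat
  assumes x: "0 < x" "x < 1" and c: "c * (2 * real p) = 1"
  defines "d \<equiv> c * real m + c"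
  shows "((x / (1 - x)) powr c) ^ m / (((x / (1 - x)) powr c) ^ (2 * p) + 1) powr \<beta>
      * (c * (x / (1 - x)) powr (c - 1) / (1 - x)\<^sup>2)
    = c * (x powr (d - 1) * (1 - x) powr (\<beta> - d - 1))"
proof -
  define y where "y = x / (1 - x)"
  have pos: "y > 0" "1 - x > 0" using x by (auto simp: y_def)
  have power: "(y powr c) ^ n = y powr (c * real n)" for n
    using pos by (simp add: powr_realpow[symmetric] powr_powr)
  have "(y powr c) ^ (2 * p) + 1 = 1 / (1 - x)"
    using power[of "2 * p"] c x by (simp add: y_def field_simps)
  then have "(y powr c) ^ m / ((y powr c) ^ (2 * p) + 1) powr \<beta> = y powr (c * real m) * (1 - x) powr \<beta>"
    using pos by (simp add: power powr_divide)
  then have "(y powr c) ^ m / ((y powr c) ^ (2 * p) + 1) powr \<beta> * (c * y powr (c - 1) / (1 - x)\<^sup>2)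
      = c * (y powr (c * real m) * y powr (c - 1)) * ((1 - x) powr \<beta> / (1 - x) powr 2)"
    using pos by (simp add: powr_realpow)
  also have "y powr (c * real m) * y powr (c - 1) = x powr (d - 1) / (1 - x) powr (d - 1)"
    using pos x by (simp add: powr_add[symmetric] d_def algebra_simps y_def powr_divide)
  also have "c * (x powr (d - 1) / (1 - x) powr (d - 1)) * ((1 - x) powr \<beta> / (1 - x) powr 2)
      = c * (x powr (d - 1) * ((1 - x) powr \<beta> / ((1 - x) powr (d - 1) * (1 - x) powr 2)))"
    by simp
  also have "(1 - x) powr (d - 1) * (1 - x) powr 2 = (1 - x) powr (d + 1)"
    by (simp add: powr_add[symmetric] add.commute)
  also have "(1 - x) powr \<beta> / (1 - x) powr (d + 1) = (1 - x) powr (\<beta> - d - 1)"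
    by (simp add: powr_diff[symmetric] diff_diff_eq)
  finally show ?thesis unfolding y_def .
qed

lemma
  fixes c :: real
  assumes c: "c > 0"
  defines "g \<equiv> \<lambda>x. (x / (1 - x)) powr c"
    and "g' \<equiv> \<lambda>x. c * (x / (1 - x)) powr (c - 1) / (1 - x)\<^sup>2"
  shows Beta_substitution_has_derivative: "\<And>x. 0 < x \<Longrightarrow> x < 1 \<Longrightarrow> (g has_real_derivative g' x) (at x)"
    and Beta_substitution_derivative_cont: "\<And>x. 0 < x \<Longrightarrow> x < 1 \<Longrightarrow> isCont g' x"
    and Beta_substitution_derivative_nonneg: "\<And>x. 0 \<le> x \<Longrightarrow> x \<le> 1 \<Longrightarrow> g' x \<ge> 0"
    and Beta_substitution_tendsto_0: "((ereal \<circ> g \<circ> real_of_ereal) \<longlongrightarrow> 0) (at_right 0)"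
    and Beta_substitution_tendsto_infinity: "((ereal \<circ> g \<circ> real_of_ereal) \<longlongrightarrow> \<infinity>) (at_left 1)"
proof -
  show "(g has_real_derivative g' x) (at x)" if "0 < x" "x < 1" for x
  proof -
    have "((\<lambda>x. x / (1 - x)) has_real_derivative 1 / (1 - x)\<^sup>2) (at x)"
      using that by (auto intro!: derivative_eq_intros simp: field_simps power2_eq_square)
    from DERIV_fun_powr[OF this, of c] that show ?thesis
      unfolding g_def g'_def by (simp add: field_simps)
  qed
  show "isCont g' x" if "0 < x" "x < 1" for x
    unfolding g'_def using that by (intro continuous_intros) auto
  show "g' x \<ge> 0" if "0 \<le> x" "x \<le> 1" for x
    unfolding g'_def using that c by simp
  have "(g \<longlongrightarrow> 0) (at_right 0)" "filterlim g at_top (at_left 1)"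
    unfolding g_def using c by real_asymp+
  then show "((ereal \<circ> g \<circ> real_of_ereal) \<longlongrightarrow> 0) (at_right 0)"
    and "((ereal \<circ> g \<circ> real_of_ereal) \<longlongrightarrow> \<infinity>) (at_left 1)"
    by (simp_all add: zero_ereal_def one_ereal_def ereal_tendsto_simps)
qed

lemma
  fixes p m :: nat and \<beta> :: real
  assumes p: "p \<ge> 1" and \<beta>: "\<beta> > (real m + 1) / (2 * real p)"
  defines "c \<equiv> 1 / (2 * real p)"
    and "d \<equiv> (real m + 1) / (2 * real p)"
  shows set_integrable_power_div_even_power_add_one_powr:
      "set_integrable lborel {0<..} (\<lambda>t. t ^ m / (t ^ (2 * p) + 1) powr \<beta>)"
    and set_integral_power_div_even_power_add_one_powr:
      "(LINT t:{0<..}|lborel. t ^ m / (t ^ (2 * p) + 1) powr \<beta>) = c * Beta d (\<beta> - d)"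
proof -
  define g where "g = (\<lambda>x. (x / (1 - x)) powr c)"
  define g' where "g' = (\<lambda>x. c * (x / (1 - x)) powr (c - 1) / (1 - x)\<^sup>2)"
  define k where "k t = t ^ m / (t ^ (2 * p) + 1) powr \<beta>" for t :: real
  define B where "B x = c * (x powr (d - 1) * (1 - x) powr (\<beta> - d - 1))" for x :: real
  have c: "c > 0" "\<beta> - d > 0" "c * (2 * real p) = 1" "d > 0" "d = c * real m + c"
    using p \<beta> by (auto simp: c_def d_def field_simps)
  have einterval_0_1: "einterval 0 1 = {0<..<(1::real)}"
    by (auto simp: einterval_def zero_ereal_def one_ereal_def)
  have einterval_0_inf: "einterval 0 \<infinity> = ({0<..} :: real set)"
    by (auto simp: einterval_def zero_ereal_def)
  have subst: "k (g x) * g' x = B x" if "0 < x" "x < 1" for x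
    using Beta_substitution_identity[OF that c(3), of m \<beta>] c(5)
    unfolding k_def g_def g'_def B_def by simp
  have Beta: "(B has_integral c * Beta d (\<beta> - d)) {0<..<1}"
    unfolding B_def using has_integral_Beta_real[of d "\<beta> - d"] c
    by (intro has_integral_mult_right) (simp add: has_integral_Icc_iff_Ioo)
  have "set_integrable lborel {0<..<1} (\<lambda>x. x powr (d - 1) * (1 - x) powr (\<beta> - d - 1))"
    by (rule set_integrable_subset[OF integrable_Beta[of d "\<beta> - d"]]) (use c in auto)
  then have B_integrable: "set_integrable lborel {0<..<1} B"
    unfolding B_def by (rule set_integrable_mult_right)
  have "set_integrable lborel {0<..<1} (\<lambda>x. k (g x) * g' x) = set_integrable lborel {0<..<1} B"
    by (rule set_integrable_cong) (auto simp: subst)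
  with B_integrable have kg_integrable: "set_integrable lborel (einterval 0 1) (\<lambda>x. k (g x) * g' x)"
    by (simp add: einterval_0_1)
  have deriv: "(g has_real_derivative g' x) (at x)" if "0 < x" "x < 1" for x
    using Beta_substitution_has_derivative[OF c(1) that] by (simp add: g_def g'_def)
  have g'_cont: "isCont g' x" if "0 < x" "x < 1" for x
    using Beta_substitution_derivative_cont[OF c(1) that] by (simp add: g'_def)
  have g'_nonneg: "g' x \<ge> 0" if "0 \<le> x" "x \<le> 1" for x
    using Beta_substitution_derivative_nonneg[OF c(1) that] by (simp add: g'_def)
  note substitution = interval_integral_substitution_nonneg[of 0 1 g g' k 0 \<infinity>, OF _ deriv _ g'_cont _
      g'_nonneg Beta_substitution_tendsto_0[OF c(1), folded g_def]
      Beta_substitution_tendsto_infinity[OF c(1), folded g_def] kg_integrable]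
  have k_cont: "isCont k y" for y
    unfolding k_def using even_power_add_pos[of 1 y p] by (intro continuous_intros) auto
  have k: "(\<lambda>t. t ^ m / (t ^ (2 * p) + 1) powr \<beta>) = k" by (simp add: k_def fun_eq_iff)
  have "set_integrable lborel (einterval 0 \<infinity>) k"
    by (rule substitution(1)) (auto simp: zero_ereal_def one_ereal_def k_cont k_def g_def)
  then show "set_integrable lborel {0<..} (\<lambda>t. t ^ m / (t ^ (2 * p) + 1) powr \<beta>)"
    unfolding k einterval_0_inf .
  have "(LBINT t=0..\<infinity>. k t) = (LBINT x=0..1. k (g x) * g' x)"
    by (rule substitution(2)) (auto simp: zero_ereal_def one_ereal_def k_cont k_def g_def)
  then have "(LINT t:{0<..}|lborel. t ^ m / (t ^ (2 * p) + 1) powr \<beta>) = (LBINT x=0..1. k (g x) * g' x)"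
    unfolding k interval_lebesgue_integral_def einterval_0_inf by simp
  also have "\<dots> = (LBINT x:{0<..<1}. B x)"
    unfolding interval_lebesgue_integral_def einterval_0_1 by (auto intro!: set_lebesgue_integral_cong subst)
  also have "\<dots> = c * Beta d (\<beta> - d)"
    using set_borel_integral_eq_integral(2)[OF B_integrable] Beta by (auto simp: has_integral_iff)
  finally show "(LINT t:{0<..}|lborel. t ^ m / (t ^ (2 * p) + 1) powr \<beta>) = c * Beta d (\<beta> - d)" .
qed

lemma lborel_integral_even:
  fixes h :: "real \<Rightarrow> real"
  assumes h: "set_integrable lborel {0<..} h" and even: "\<And>x. h (-x) = h x"
    and h_measurable: "h \<in> borel_measurable borel"
  shows "integrable lborel h" and "integral\<^sup>L lborel h = 2 * (LINT x:{0<..}|lborel. h x)"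
proof -
  define h_pos where "h_pos x = indicator {0<..} x * h x" for x :: real
  have pos: "integrable lborel h_pos" using h unfolding set_integrable_def h_pos_def by simp
  have neg: "integrable lborel (\<lambda>x. h_pos (0 + (-1) * x))"
    by (rule lborel_integrable_real_affine[OF pos]) simp
  have sum: "integrable lborel (\<lambda>x. h_pos x + h_pos (0 + (-1) * x))"
    by (rule Bochner_Integration.integrable_add[OF pos neg])
  have ae: "AE x in lborel. h_pos x + h_pos (0 + (-1) * x) = h x"
    using AE_lborel_singleton[of 0] by eventually_elim (auto simp: h_pos_def indicator_def even)
  show "integrable lborel h"
    by (rule integrable_cong_AE_imp[OF sum _ ae]) (use h_measurable in simp)
  have "integral\<^sup>L lborel h = integral\<^sup>L lborel (\<lambda>x. h_pos x + h_pos (0 + (-1) * x))"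
    using ae h_measurable borel_measurable_integrable[OF sum]
    by (intro integral_cong_AE) (auto simp: eq_commute)
  also have "\<dots> = integral\<^sup>L lborel h_pos + integral\<^sup>L lborel (\<lambda>x. h_pos (0 + (-1) * x))"
    by (rule Bochner_Integration.integral_add[OF pos neg])
  also have "integral\<^sup>L lborel (\<lambda>x. h_pos (0 + (-1) * x)) = integral\<^sup>L lborel h_pos"
    using lborel_integral_real_affine[of "-1" h_pos 0] by simp
  also have "integral\<^sup>L lborel h_pos = (LINT x:{0<..}|lborel. h x)"
    by (simp add: set_lebesgue_integral_def h_pos_def[abs_def])
  finally show "integral\<^sup>L lborel h = 2 * (LINT x:{0<..}|lborel. h x)" by simp
qed

lemma
  fixes h :: "real \<Rightarrow> real"
  assumes h: "integrable lborel h" and \<xi>: "\<xi> > 0"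
  shows integrable_dilate: "integrable lborel (\<lambda>t. h (t / \<xi>))"
    and integral_dilate: "integral\<^sup>L lborel (\<lambda>t. h (t / \<xi>)) = \<xi> * integral\<^sup>L lborel h"
  using lborel_integrable_real_affine[OF h, of "1 / \<xi>" 0]
    lborel_integral_real_affine[of \<xi> "\<lambda>t. h (t / \<xi>)" 0] \<xi>
  by simp_all

lemma one_add_power_le: "(x::real) \<ge> 0 \<Longrightarrow> (1 + x) ^ r \<le> 2 ^ r * (1 + x ^ r)"
proof (cases "x \<le> 1")
  case True
  assume "x \<ge> 0"
  then have "(1 + x) ^ r \<le> 2 ^ r" using True by (intro power_mono) auto
  also have "\<dots> \<le> 2 ^ r * (1 + x ^ r)" using \<open>x \<ge> 0\<close> by simp
  finally show ?thesis .
next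
  case False
  then have "(1 + x) ^ r \<le> (2 * x) ^ r" by (intro power_mono) auto
  also have "\<dots> \<le> 2 ^ r * (1 + x ^ r)" by (simp add: power_mult_distrib)
  finally show ?thesis .
qed

definition kernel :: "nat \<Rightarrow> real \<Rightarrow> real \<Rightarrow> real \<Rightarrow> real" where
  "kernel a \<beta> \<xi> t = 1 / (t ^ (2 * a) + \<xi> ^ (2 * a)) powr \<beta>"

lemma kernel_pos: "\<xi> > 0 \<Longrightarrow> kernel a \<beta> \<xi> t > 0"
  unfolding kernel_def using even_power_add_pos[of "\<xi> ^ (2 * a)" t a] by simp

lemma kernel_le:
  assumes "\<xi> > 0" "\<beta> \<ge> 0"
  shows "kernel a \<beta> \<xi> t \<le> 1 / (\<xi> ^ (2 * a)) powr \<beta>"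
proof -
  have "t ^ (2 * a) \<ge> 0" by (simp add: power_mult)
  then have "(\<xi> ^ (2 * a)) powr \<beta> \<le> (t ^ (2 * a) + \<xi> ^ (2 * a)) powr \<beta>"
    using assms by (intro powr_mono2) auto
  then show ?thesis
    unfolding kernel_def using assms even_power_add_pos[of "\<xi> ^ (2 * a)" t a]
    by (intro divide_left_mono mult_pos_pos) auto
qed

lemma continuous_on_kernel: "\<xi> > 0 \<Longrightarrow> continuous_on UNIV (kernel a \<beta> \<xi>)"
  unfolding kernel_def[abs_def] using even_power_add_pos[of "\<xi> ^ (2 * a)" _ a]
  by (intro continuous_intros) (auto simp: less_imp_neq[symmetric])

lemma kernel_dilate:
  assumes \<xi>: "\<xi> > 0"
  shows "kernel a \<beta> \<xi> t = \<xi> powr (- (2 * real a * \<beta>)) * kernel a \<beta> 1 (t / \<xi>)"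
proof -
  have "t ^ (2 * a) + \<xi> ^ (2 * a) = \<xi> ^ (2 * a) * ((t / \<xi>) ^ (2 * a) + 1)"
    using \<xi> by (simp add: power_divide field_simps)
  then have "(t ^ (2 * a) + \<xi> ^ (2 * a)) powr \<beta> = \<xi> powr (2 * real a * \<beta>) * ((t / \<xi>) ^ (2 * a) + 1) powr \<beta>"
    using even_power_add_pos[of 1 "t / \<xi>" a] \<xi>
    by (simp add: powr_mult powr_realpow[symmetric] powr_powr)
  then show ?thesis
    unfolding kernel_def using \<xi> by (simp add: powr_minus_divide)
qed

lemma kernel_1: "kernel a \<beta> 1 = (\<lambda>u. 1 / (u ^ (2 * a) + 1) powr \<beta>)"
  by (simp add: kernel_def fun_eq_iff)

lemma kernel_even: "kernel a \<beta> \<xi> (- u) = kernel a \<beta> \<xi> u"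
  by (simp add: kernel_def power_mult)

lemma
  fixes a :: nat and \<beta> :: real
  assumes a: "a \<ge> 1" and \<beta>: "\<beta> > 1 / (2 * real a)"
  shows integrable_kernel_1: "integrable lborel (kernel a \<beta> 1)"
    and integral_kernel_1: "integral\<^sup>L lborel (kernel a \<beta> 1)
       = Gamma (1 / (2 * real a)) * Gamma (\<beta> - 1 / (2 * real a)) / (real a * Gamma \<beta>)"
proof -
  note half_line = set_integrable_power_div_even_power_add_one_powr[of a 0 \<beta>]
    set_integral_power_div_even_power_add_one_powr[of a 0 \<beta>]
  have "set_integrable lborel {0<..} (kernel a \<beta> 1)"
    using half_line(1) a \<beta> by (simp add: kernel_1)
  note whole_line = lborel_integral_even[OF this kernel_even
      borel_measurable_continuous_onI[OF continuous_on_kernel[OF zero_less_one]]]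
  show "integrable lborel (kernel a \<beta> 1)" by (rule whole_line(1))
  have "1 / (2 * real a) > 0" using a by simp
  then have "Gamma \<beta> > 0" using \<beta> by (intro Gamma_real_pos) linarith
  have "(LINT t:{0<..}|lborel. kernel a \<beta> 1 t)
      = 1 / (2 * real a) * Beta (1 / (2 * real a)) (\<beta> - 1 / (2 * real a))"
    using half_line(2) a \<beta> by (simp add: kernel_1)
  with \<open>Gamma \<beta> > 0\<close> a show "integral\<^sup>L lborel (kernel a \<beta> 1)
       = Gamma (1 / (2 * real a)) * Gamma (\<beta> - 1 / (2 * real a)) / (real a * Gamma \<beta>)"
    unfolding whole_line(2) Beta_def by (simp add: field_simps)
qed

lemma
  fixes a r :: nat and \<beta> :: real
  assumes a: "a \<ge> 1" and \<beta>: "\<beta> > (real r + 1) / (2 * real a)"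
  defines "weighted \<equiv> \<lambda>u. (1 + \<bar>u\<bar>) ^ r * kernel a \<beta> 1 u"
  shows integrable_weighted_kernel_1: "integrable lborel weighted"
    and integral_weighted_kernel_1: "integral\<^sup>L lborel weighted
       = 2 * (LINT t:{0<..}|lborel. (1 + t) ^ r / (t ^ (2 * a) + 1) powr \<beta>)"
proof -
  have "(real 0 + 1) / (2 * real a) \<le> (real r + 1) / (2 * real a)"
    by (intro divide_right_mono) auto
  then have "set_integrable lborel {0<..} (\<lambda>u. u ^ 0 / (u ^ (2 * a) + 1) powr \<beta>)"
    using \<beta> by (intro set_integrable_power_div_even_power_add_one_powr a) auto
  moreover have "set_integrable lborel {0<..} (\<lambda>u. u ^ r / (u ^ (2 * a) + 1) powr \<beta>)"
    by (intro set_integrable_power_div_even_power_add_one_powr a \<beta>)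
  ultimately have majorant: "set_integrable lborel {0<..}
      (\<lambda>u. 2 ^ r * (u ^ 0 / (u ^ (2 * a) + 1) powr \<beta> + u ^ r / (u ^ (2 * a) + 1) powr \<beta>))"
    by (intro set_integrable_mult_right set_integral_add)
  have measurable: "weighted \<in> borel_measurable borel"
    unfolding weighted_def using continuous_on_kernel[of 1 a \<beta>]
    by (intro borel_measurable_continuous_onI continuous_intros) auto
  have half_line: "set_integrable lborel {0<..} weighted"
  proof (rule set_integrable_bound[OF majorant])
    show "set_borel_measurable lborel {0<..} weighted"
      unfolding set_borel_measurable_def using measurable by measurable
    have "norm (weighted u) \<le> norm (2 ^ r * (u ^ 0 / (u ^ (2 * a) + 1) powr \<beta>
        + u ^ r / (u ^ (2 * a) + 1) powr \<beta>))" if u: "u > 0" for u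
    proof -
      have D: "(u ^ (2 * a) + 1) powr \<beta> > 0" using even_power_add_pos[of 1 u a] by simp
      have "norm (weighted u) = (1 + u) ^ r / (u ^ (2 * a) + 1) powr \<beta>"
        using u by (simp add: weighted_def kernel_1)
      also have "\<dots> \<le> 2 ^ r * (1 + u ^ r) / (u ^ (2 * a) + 1) powr \<beta>"
        using u D by (intro divide_right_mono one_add_power_le) auto
      also have "\<dots> = norm (2 ^ r * (u ^ 0 / (u ^ (2 * a) + 1) powr \<beta>
          + u ^ r / (u ^ (2 * a) + 1) powr \<beta>))"
        using u D by (simp add: add_divide_distrib[symmetric])
      finally show ?thesis .
    qed
    then show "AE u in lborel. u \<in> {0<..} \<longrightarrow> norm (weighted u) \<le> norm (2 ^ r *
        (u ^ 0 / (u ^ (2 * a) + 1) powr \<beta> + u ^ r / (u ^ (2 * a) + 1) powr \<beta>))"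
      by auto
  qed
  have even: "weighted (- u) = weighted u" for u
    by (simp add: weighted_def kernel_even)
  note whole_line = lborel_integral_even[OF half_line even measurable]
  show "integrable lborel weighted" by (rule whole_line(1))
  show "integral\<^sup>L lborel weighted = 2 * (LINT t:{0<..}|lborel. (1 + t) ^ r / (t ^ (2 * a) + 1) powr \<beta>)"
    unfolding whole_line(2) by (intro arg_cong[where f="(*) 2"] set_lebesgue_integral_cong)
      (auto simp: weighted_def kernel_1)
qed

lemma fdiff_const: "r \<ge> 1 \<Longrightarrow> fdiff r t (\<lambda>_. c) = (\<lambda>_. 0)"
proof -
  assume "r \<ge> 1"
  then obtain n where r: "r = Suc n" by (cases r) auto
  have "(Delta t ^^ n) (\<lambda>_. 0) = (\<lambda>_. 0)" by (induction n) (simp_all add: Delta_def)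
  then show ?thesis
    by (simp add: r fdiff_eq_funpow funpow_Suc_right Delta_def del: funpow.simps)
qed

lemma alpha_coef_sum:
  fixes u :: "nat \<Rightarrow> real"
  assumes r: "r \<ge> 1"
  shows "(\<Sum>j=0..r. alpha_coef r j * u j) = u 0 + (\<Sum>j=0..r. (-1) ^ (r - j) * real (r choose j) * u j)"
proof -
  have split_0: "(\<Sum>j=0..r. g j) = g 0 + (\<Sum>j=1..r. g j)" for g :: "nat \<Rightarrow> real"
    by (simp add: sum.atLeast_Suc_atMost)
  have "(\<Sum>j=0..r. (-1) ^ (r - j) * real (r choose j)) = 0"
    using fun_cong[OF fdiff_const[OF r, of _ 1], of 0] by (simp add: fdiff_def)
  then have "alpha_coef r 0 = 1 + (-1) ^ r"
    unfolding alpha_coef_def split_0 by simp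
  moreover have "(\<Sum>j=1..r. alpha_coef r j * u j) = (\<Sum>j=1..r. (-1) ^ (r - j) * real (r choose j) * u j)"
    by (intro sum.cong) (auto simp: alpha_coef_def)
  ultimately have "(\<Sum>j=0..r. alpha_coef r j * u j)
      = u 0 + ((-1) ^ r * u 0 + (\<Sum>j=1..r. (-1) ^ (r - j) * real (r choose j) * u j))"
    unfolding split_0[of "\<lambda>j. alpha_coef r j * u j"] by (simp add: algebra_simps)
  also have "(-1) ^ r * u 0 + (\<Sum>j=1..r. (-1) ^ (r - j) * real (r choose j) * u j)
      = (\<Sum>j=0..r. (-1) ^ (r - j) * real (r choose j) * u j)"
    by (simp add: split_0[of "\<lambda>j. (-1) ^ (r - j) * real (r choose j) * u j"])
  finally show ?thesis .
qed

lemma L1_norm_mult: "L1_norm (\<lambda>x. c * g x) = \<bar>c\<bar> * L1_norm g"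
  by (simp add: L1_norm_def abs_mult)

lemma
  fixes F :: "real \<Rightarrow> real \<Rightarrow> real" and g :: "real \<Rightarrow> real"
  assumes F[measurable]: "(\<lambda>(x, t). F x t) \<in> borel_measurable (lborel \<Otimes>\<^sub>M lborel)"
    and fibres: "\<And>x. integrable lborel (F x)"
    and sections: "\<And>t. integrable lborel (\<lambda>x. F x t)"
    and bound: "\<And>t. L1_norm (\<lambda>x. F x t) \<le> g t" and g: "integrable lborel g"
  shows integrable_integral_fibres: "integrable lborel (\<lambda>x. integral\<^sup>L lborel (F x))"
    and L1_norm_integral_fibres_le: "L1_norm (\<lambda>x. integral\<^sup>L lborel (F x)) \<le> integral\<^sup>L lborel g"
proof -
  have measurable: "(\<lambda>x. integral\<^sup>L lborel (F x)) \<in> borel_measurable lborel"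
    using lborel.borel_measurable_lebesgue_integral[OF F] by measurable
  have g_nonneg: "g t \<ge> 0" for t
    using bound[of t] L1_norm_nonneg[of "\<lambda>x. F x t"] by linarith
  have "(\<integral>\<^sup>+ x. ennreal \<bar>integral\<^sup>L lborel (F x)\<bar> \<partial>lborel)
      \<le> (\<integral>\<^sup>+ x. (\<integral>\<^sup>+ t. ennreal \<bar>F x t\<bar> \<partial>lborel) \<partial>lborel)"
    using integral_norm_bound_ennreal[OF fibres] by (intro nn_integral_mono) simp
  also have "\<dots> = (\<integral>\<^sup>+ t. (\<integral>\<^sup>+ x. ennreal \<bar>F x t\<bar> \<partial>lborel) \<partial>lborel)"
    by (rule lborel_pair.Fubini'[symmetric]) measurable
  also have "\<dots> = (\<integral>\<^sup>+ t. ennreal (L1_norm (\<lambda>x. F x t)) \<partial>lborel)"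
    unfolding L1_norm_def using sections by (intro nn_integral_cong nn_integral_eq_integral) auto
  also have "\<dots> \<le> (\<integral>\<^sup>+ t. ennreal (g t) \<partial>lborel)"
    using bound by (intro nn_integral_mono ennreal_leI)
  also have "\<dots> = ennreal (integral\<^sup>L lborel g)"
    using g g_nonneg by (intro nn_integral_eq_integral) auto
  finally have le: "(\<integral>\<^sup>+ x. ennreal \<bar>integral\<^sup>L lborel (F x)\<bar> \<partial>lborel) \<le> ennreal (integral\<^sup>L lborel g)" .
  then show integrable: "integrable lborel (\<lambda>x. integral\<^sup>L lborel (F x))"
    by (intro integrableI_bounded[OF measurable]) (auto simp: top.not_eq_extremum intro: le_less_trans)
  have "ennreal (L1_norm (\<lambda>x. integral\<^sup>L lborel (F x)))
      = (\<integral>\<^sup>+ x. ennreal \<bar>integral\<^sup>L lborel (F x)\<bar> \<partial>lborel)"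
    unfolding L1_norm_def using integrable by (intro nn_integral_eq_integral[symmetric]) auto
  with le have "ennreal (L1_norm (\<lambda>x. integral\<^sup>L lborel (F x))) \<le> ennreal (integral\<^sup>L lborel g)"
    by simp
  moreover have "integral\<^sup>L lborel g \<ge> 0"
    using g_nonneg by (intro integral_nonneg_AE) simp
  ultimately show "L1_norm (\<lambda>x. integral\<^sup>L lborel (F x)) \<le> integral\<^sup>L lborel g"
    by (simp add: ennreal_le_iff)
qed

lemma W_const_dilate:
  assumes \<xi>: "\<xi> > 0"
  shows "W_const a \<beta> \<xi> * (\<xi> powr (- (2 * real a * \<beta>)) * \<xi>)
    = real a * Gamma \<beta> / (Gamma (1 / (2 * real a)) * Gamma (\<beta> - 1 / (2 * real a)))"
proof -
  have "\<xi> powr (2 * real a * \<beta> - 1) * (\<xi> powr (- (2 * real a * \<beta>)) * \<xi>)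
      = \<xi> powr (2 * real a * \<beta> - 1) * \<xi> powr (- (2 * real a * \<beta>)) * \<xi> powr 1"
    using \<xi> by simp
  also have "\<dots> = \<xi> powr (2 * real a * \<beta> - 1 + - (2 * real a * \<beta>) + 1)"
    by (simp only: powr_add)
  also have "\<dots> = 1" using \<xi> by simp
  finally show ?thesis by (simp add: W_const_def field_simps)
qed

lemma
  fixes a :: nat and \<beta> \<xi> :: real
  assumes a: "a \<ge> 1" and \<beta>: "\<beta> > 1 / (2 * real a)" and \<xi>: "\<xi> > 0"
  shows integrable_kernel: "integrable lborel (kernel a \<beta> \<xi>)"
    and W_const_integral_kernel: "W_const a \<beta> \<xi> * integral\<^sup>L lborel (kernel a \<beta> \<xi>) = 1"
proof -
  define P where "P = \<xi> powr (- (2 * real a * \<beta>))"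
  have kernel: "kernel a \<beta> \<xi> = (\<lambda>t. P * kernel a \<beta> 1 (t / \<xi>))"
    using kernel_dilate[OF \<xi>] by (simp add: P_def fun_eq_iff)
  show "integrable lborel (kernel a \<beta> \<xi>)"
    unfolding kernel by (intro integrable_mult_right integrable_dilate integrable_kernel_1 a \<beta> \<xi>)
  have "1 / (2 * real a) > 0" using a by simp
  with \<beta> have "\<beta> > 0" by linarith
  with \<beta> \<open>1 / (2 * real a) > 0\<close>
  have Gamma_pos: "Gamma \<beta> > 0" "Gamma (1 / (2 * real a)) > 0" "Gamma (\<beta> - 1 / (2 * real a)) > 0"
    by (auto intro!: Gamma_real_pos)
  have "W_const a \<beta> \<xi> * integral\<^sup>L lborel (kernel a \<beta> \<xi>)
      = W_const a \<beta> \<xi> * (P * \<xi>) * integral\<^sup>L lborel (kernel a \<beta> 1)"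
    unfolding kernel integral_mult_right_zero integral_dilate[OF integrable_kernel_1[OF a \<beta>] \<xi>]
    by simp
  then show "W_const a \<beta> \<xi> * integral\<^sup>L lborel (kernel a \<beta> \<xi>) = 1"
    using a Gamma_pos unfolding P_def W_const_dilate[OF \<xi>] integral_kernel_1[OF a \<beta>] by simp
qed

lemma
  fixes a r :: nat and \<beta> \<xi> :: real
  assumes a: "a \<ge> 1" and \<beta>: "\<beta> > (real r + 1) / (2 * real a)" and \<xi>: "\<xi> > 0"
  shows integrable_weighted_kernel: "integrable lborel (\<lambda>t. (1 + \<bar>t\<bar> / \<xi>) ^ r * kernel a \<beta> \<xi> t)"
    and W_const_integral_weighted_kernel:
      "W_const a \<beta> \<xi> * (LINT t|lborel. (1 + \<bar>t\<bar> / \<xi>) ^ r * kernel a \<beta> \<xi> t)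
        = 2 * real a * Gamma \<beta> / (Gamma (1 / (2 * real a)) * Gamma (\<beta> - 1 / (2 * real a)))
          * (LINT t:{0<..}|lborel. (1 + t) ^ r / (t ^ (2 * a) + 1) powr \<beta>)"
proof -
  define P where "P = \<xi> powr (- (2 * real a * \<beta>))"
  define weighted where "weighted u = (1 + \<bar>u\<bar>) ^ r * kernel a \<beta> 1 u" for u
  have weighted_dilate: "(\<lambda>t. (1 + \<bar>t\<bar> / \<xi>) ^ r * kernel a \<beta> \<xi> t) = (\<lambda>t. P * weighted (t / \<xi>))"
    using kernel_dilate[OF \<xi>] \<xi> by (simp add: P_def weighted_def fun_eq_iff abs_div)
  note weighted = integrable_weighted_kernel_1[OF a \<beta>, folded weighted_def]
    integral_weighted_kernel_1[OF a \<beta>, folded weighted_def]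
  show "integrable lborel (\<lambda>t. (1 + \<bar>t\<bar> / \<xi>) ^ r * kernel a \<beta> \<xi> t)"
    unfolding weighted_dilate by (intro integrable_mult_right integrable_dilate weighted(1) \<xi>)
  have "W_const a \<beta> \<xi> * (LINT t|lborel. (1 + \<bar>t\<bar> / \<xi>) ^ r * kernel a \<beta> \<xi> t)
      = W_const a \<beta> \<xi> * (P * \<xi>) * integral\<^sup>L lborel weighted"
    unfolding weighted_dilate integral_mult_right_zero integral_dilate[OF weighted(1) \<xi>] by simp
  then show "W_const a \<beta> \<xi> * (LINT t|lborel. (1 + \<bar>t\<bar> / \<xi>) ^ r * kernel a \<beta> \<xi> t)
        = 2 * real a * Gamma \<beta> / (Gamma (1 / (2 * real a)) * Gamma (\<beta> - 1 / (2 * real a)))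
          * (LINT t:{0<..}|lborel. (1 + t) ^ r / (t ^ (2 * a) + 1) powr \<beta>)"
    unfolding P_def W_const_dilate[OF \<xi>] weighted(2) by simp
qed

lemma integrable_fdiff_mult_kernel:
  fixes f :: "real \<Rightarrow> real"
  assumes f: "integrable lborel f" and \<xi>: "\<xi> > 0" and \<beta>: "\<beta> \<ge> 0"
    and kernel: "integrable lborel (kernel a \<beta> \<xi>)"
  shows "integrable lborel (\<lambda>t. fdiff r t f x * kernel a \<beta> \<xi> t)"
proof -
  have [measurable]: "f \<in> borel_measurable borel" "kernel a \<beta> \<xi> \<in> borel_measurable borel"
    using f borel_measurable_continuous_onI[OF continuous_on_kernel[OF \<xi>]] by auto
  have "integrable lborel (\<lambda>t. f (x + real j * t) * kernel a \<beta> \<xi> t)" for j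
  proof (cases "j = 0")
    case True
    then show ?thesis using integrable_mult_right[OF kernel, of "f x"] by simp
  next
    case False
    then have "integrable lborel (\<lambda>t. 1 / (\<xi> ^ (2 * a)) powr \<beta> * f (x + real j * t))"
      using lborel_integrable_real_affine[OF f, of "real j" x] by (intro integrable_mult_right) simp
    then show ?thesis
    proof (rule Bochner_Integration.integrable_bound)
      show "AE t in lborel. norm (f (x + real j * t) * kernel a \<beta> \<xi> t)
          \<le> norm (1 / (\<xi> ^ (2 * a)) powr \<beta> * f (x + real j * t))"
      proof (rule AE_I2)
        fix t
        have "kernel a \<beta> \<xi> t * \<bar>f (x + real j * t)\<bar> \<le> 1 / (\<xi> ^ (2 * a)) powr \<beta> * \<bar>f (x + real j * t)\<bar>"
          by (intro mult_right_mono kernel_le \<xi> \<beta>) simp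
        then show "norm (f (x + real j * t) * kernel a \<beta> \<xi> t)
            \<le> norm (1 / (\<xi> ^ (2 * a)) powr \<beta> * f (x + real j * t))"
          using kernel_pos[OF \<xi>, of a \<beta> t] by (simp add: abs_mult mult.commute)
      qed
    qed measurable
  qed
  then show ?thesis
    unfolding fdiff_def sum_distrib_right
    by (intro Bochner_Integration.integrable_sum) (simp add: mult.assoc integrable_mult_right)
qed

lemma M_op_minus_eq:
  assumes r: "r \<ge> 1" and kernel: "integrable lborel (kernel a \<beta> \<xi>)"
    and W: "W_const a \<beta> \<xi> * integral\<^sup>L lborel (kernel a \<beta> \<xi>) = 1"
    and fibre: "integrable lborel (\<lambda>t. fdiff r t f x * kernel a \<beta> \<xi> t)"
  shows "M_op r a \<beta> \<xi> f x - f x = W_const a \<beta> \<xi> * (LINT t|lborel. fdiff r t f x * kernel a \<beta> \<xi> t)"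
proof -
  have "(\<Sum>j=0..r. alpha_coef r j * f (x + real j * t)) / (t ^ (2 * a) + \<xi> ^ (2 * a)) powr \<beta>
      = f x * kernel a \<beta> \<xi> t + fdiff r t f x * kernel a \<beta> \<xi> t" for t
    using alpha_coef_sum[OF r, of "\<lambda>j. f (x + real j * t)"]
    by (simp add: kernel_def fdiff_def divide_simps)
  then have "M_op r a \<beta> \<xi> f x = W_const a \<beta> \<xi> *
      (LINT t|lborel. f x * kernel a \<beta> \<xi> t + fdiff r t f x * kernel a \<beta> \<xi> t)"
    by (simp add: M_op_def)
  also have "\<dots> = f x * (W_const a \<beta> \<xi> * integral\<^sup>L lborel (kernel a \<beta> \<xi>))
      + W_const a \<beta> \<xi> * (LINT t|lborel. fdiff r t f x * kernel a \<beta> \<xi> t)"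
    using kernel fibre by (simp add: algebra_simps)
  finally show ?thesis unfolding W by simp
qed

lemma L1_norm_fdiff_mult_kernel_le:
  assumes f: "integrable lborel f" and \<xi>: "\<xi> > 0"
  shows "L1_norm (\<lambda>x. fdiff r t f x * kernel a \<beta> \<xi> t)
    \<le> omega1 r f \<xi> * ((1 + \<bar>t\<bar> / \<xi>) ^ r * kernel a \<beta> \<xi> t)"
proof -
  have "L1_norm (\<lambda>x. fdiff r t f x * kernel a \<beta> \<xi> t) = kernel a \<beta> \<xi> t * L1_norm (fdiff r t f)"
    using L1_norm_mult[of "kernel a \<beta> \<xi> t" "fdiff r t f"] kernel_pos[OF \<xi>, of a \<beta> t]
    by (simp add: mult.commute)
  also have "\<dots> \<le> kernel a \<beta> \<xi> t * ((1 + \<bar>t\<bar> / \<xi>) ^ r * omega1 r f \<xi>)"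
    using kernel_pos[OF \<xi>, of a \<beta> t]
    by (intro mult_left_mono L1_norm_fdiff_le_scaled_omega1 f \<xi>) simp
  finally show ?thesis by (simp add: ac_simps)
qed

lemma L1_norm_M_op_minus_le:
  fixes r a :: nat and \<beta> \<xi> :: real and f :: "real \<Rightarrow> real"
  assumes r: "r \<ge> 1" and a: "a \<ge> 1" and \<beta>: "\<beta> > (real r + 1) / (2 * real a)"
    and f: "integrable lborel f" and \<xi>: "\<xi> > 0"
  shows "integrable lborel (\<lambda>x. M_op r a \<beta> \<xi> f x - f x)
    \<and> L1_norm (\<lambda>x. M_op r a \<beta> \<xi> f x - f x)
        \<le> 2 * real a * Gamma \<beta> / (Gamma (1 / (2 * real a)) * Gamma (\<beta> - 1 / (2 * real a)))
           * (LINT t:{0<..}|lborel. (1 + t) ^ r / (t ^ (2 * a) + 1) powr \<beta>)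
           * omega1 r f \<xi>"
proof -
  define K where "K = kernel a \<beta> \<xi>"
  define W where "W = W_const a \<beta> \<xi>"
  define F where "F x = (\<lambda>t. fdiff r t f x * K t)" for x
  have "1 / (2 * real a) \<le> (real r + 1) / (2 * real a)" by (intro divide_right_mono) auto
  with \<beta> have \<beta>': "\<beta> > 1 / (2 * real a)" by linarith
  moreover have "1 / (2 * real a) > 0" using a by simp
  ultimately have "\<beta> \<ge> 0" by linarith
  note kernel = integrable_kernel[OF a \<beta>' \<xi>] W_const_integral_kernel[OF a \<beta>' \<xi>]
  have fibres: "integrable lborel (F x)" for x
    unfolding F_def K_def by (intro integrable_fdiff_mult_kernel f \<xi> \<open>\<beta> \<ge> 0\<close> kernel(1))
  have M_op: "(\<lambda>x. M_op r a \<beta> \<xi> f x - f x) = (\<lambda>x. W * integral\<^sup>L lborel (F x))"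
    using M_op_minus_eq[OF r kernel fibres[unfolded F_def K_def]]
    by (simp add: fun_eq_iff W_def F_def K_def)
  have [measurable]: "f \<in> borel_measurable borel" "K \<in> borel_measurable borel"
    using f borel_measurable_continuous_onI[OF continuous_on_kernel[OF \<xi>]] by (auto simp: K_def)
  have F: "(\<lambda>(x, t). F x t) \<in> borel_measurable (lborel \<Otimes>\<^sub>M lborel)"
    unfolding F_def fdiff_def by measurable
  have sections: "integrable lborel (\<lambda>x. F x t)" for t
    unfolding F_def by (intro integrable_mult_left integrable_fdiff f)
  have bound: "L1_norm (\<lambda>x. F x t) \<le> omega1 r f \<xi> * ((1 + \<bar>t\<bar> / \<xi>) ^ r * K t)" for t
    unfolding F_def K_def by (rule L1_norm_fdiff_mult_kernel_le[OF f \<xi>])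
  have majorant: "integrable lborel (\<lambda>t. omega1 r f \<xi> * ((1 + \<bar>t\<bar> / \<xi>) ^ r * K t))"
    unfolding K_def by (intro integrable_mult_right integrable_weighted_kernel a \<beta> \<xi>)
  note Minkowski = integrable_integral_fibres[OF F fibres sections bound majorant]
    L1_norm_integral_fibres_le[OF F fibres sections bound majorant]
  have "integral\<^sup>L lborel K \<ge> 0"
    unfolding K_def using kernel_pos[OF \<xi>] by (intro integral_nonneg_AE) (simp add: less_imp_le)
  moreover have "W * integral\<^sup>L lborel K > 0" using kernel(2) by (simp add: W_def K_def)
  ultimately have "W > 0" by (auto simp: zero_less_mult_iff)
  with Minkowski(2) have "L1_norm (\<lambda>x. W * integral\<^sup>L lborel (F x))
      \<le> omega1 r f \<xi> * (W * (LINT t|lborel. (1 + \<bar>t\<bar> / \<xi>) ^ r * K t))"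
    by (simp add: L1_norm_mult)
  then show ?thesis
    unfolding M_op K_def W_def W_const_integral_weighted_kernel[OF a \<beta> \<xi>]
    using Minkowski(1) by (simp add: W_def integrable_mult_right ac_simps)
qed

theorem proposition2:
  fixes r a :: nat and \<beta> \<xi> :: real and f :: "real \<Rightarrow> real"
  assumes "r \<ge> 1" and "a \<ge> 1"
    and "\<beta> > (real r + 1) / (2 * real a)"
    and "continuous_on UNIV f" and "integrable lborel f"
    and "\<xi> > 0"
  shows "integrable lborel (\<lambda>x. M_op r a \<beta> \<xi> f x - f x)
    \<and> L1_norm (\<lambda>x. M_op r a \<beta> \<xi> f x - f x)
        \<le> 2 * real a * Gamma \<beta> / (Gamma (1 / (2 * real a)) * Gamma (\<beta> - 1 / (2 * real a)))
           * (LINT t:{0<..}|lborel. (1 + t) ^ r / (t ^ (2 * a) + 1) powr \<beta>)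
           * omega1 r f \<xi>
    \<and> ((\<lambda>\<eta>. L1_norm (\<lambda>x. M_op r a \<beta> \<eta> f x - f x)) \<longlongrightarrow> 0) (at_right 0)"
proof -
  define C where "C = 2 * real a * Gamma \<beta> / (Gamma (1 / (2 * real a)) * Gamma (\<beta> - 1 / (2 * real a)))
    * (LINT t:{0<..}|lborel. (1 + t) ^ r / (t ^ (2 * a) + 1) powr \<beta>)"
  note bound = L1_norm_M_op_minus_le[OF assms(1-3,5), folded C_def]
  have "((\<lambda>\<eta>. L1_norm (\<lambda>x. M_op r a \<beta> \<eta> f x - f x)) \<longlongrightarrow> 0) (at_right 0)"
  proof (rule tendsto_sandwich[where f="\<lambda>_. 0" and h="\<lambda>\<eta>. C * omega1 r f \<eta>"])
    show "\<forall>\<^sub>F \<eta> in at_right 0. L1_norm (\<lambda>x. M_op r a \<beta> \<eta> f x - f x) \<le> C * omega1 r f \<eta>"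
      using eventually_at_right_less[of "0::real"] by eventually_elim (use bound in simp)
    show "((\<lambda>\<eta>. C * omega1 r f \<eta>) \<longlongrightarrow> 0) (at_right 0)"
      using tendsto_mult_right_zero[OF omega1_tendsto_0[OF assms(4,5,1)]] .
  qed (simp_all add: L1_norm_nonneg)
  with bound[OF assms(6)] show ?thesis by (simp add: C_def)
qed

end
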